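(* Let $v\ge 0$ and consider the problem $$\min_{y\in\mathbb{R}^{n^+}}\ \sum_{j=1}^{n^+} y_j^{1/\alpha}\quad\text{s.t.}\quad 0\le y_1\le y_2\le\cdots\le y_{n^+},\qquad \sum_{j=1}^{n^+} h^+_j y_j=v .$$ Let $J$ be the transitional index and $S:=\sum_{j'=1}^{J}h^+_{j'}$. Define $$Y:=\frac{v\,S^{\frac{\alpha}{1-\alpha}}}{S^{\frac{1}{1-\alpha}}+J^{\frac{\alpha}{1-\alpha}}\sum_{j'=J+1}^{n^+}(h^+_{j'})^{\frac{1}{1-\alpha}}}\ (\ge 0).$$ Then the optimal solution of this problem is $y^*\in\mathbb{R}^{n^+}$ given by $y^*_j=Y$ for $1\le j\le J$ and $y^*_j=\left(\frac{J h^+_j}{S}\right)^{\frac{\alpha}{1-\alpha}}Y$ for $J+1\le j\le n^+$.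
   Context: Fix $N\in\mathbb{N}$, $\alpha\in(0,1)$ and an integer $1\le n^+\le N$. A function $f:[0,1]\to\mathbb{R}$ is inverse S-shaped if it is strictly increasing, continuously differentiable, and there is $x_0\in[0,1]$ such that $f'$ is strictly decreasing on $[0,x_0]$ and strictly increasing on $[x_0,1]$. Let $W^+:[0,1]\to[0,1]$ be inverse S-shaped with $W^+(0)=0$, $W^+(1)=1$. Decision weights: $h^+_j:=W^+\!\left(\frac{n^+-j+1}{N}\right)-W^+\!\left(\frac{n^+-j}{N}\right)$ for $j=1,\dots,n^+$. The transitional index is $J:=\min\{j\in\{1,\dots,n^+\}: j\,h^+_{j+1}\ge \sum_{j'=1}^{j}h^+_{j'}\}$, with the convention $h^+_{n^++1}=\infty$. *)

theory Defs
  imports "HOL-Analysis.Analysis"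
begin

definition inverse_S_shaped :: "(real \<Rightarrow> real) \<Rightarrow> bool" where
  "inverse_S_shaped f \<longleftrightarrow>
     strict_mono_on {0..1} f \<and>
     (\<exists>f'. (\<forall>x\<in>{0..1}. (f has_real_derivative f' x) (at x within {0..1})) \<and>
           continuous_on {0..1} f' \<and>
           (\<exists>x0\<in>{0..1}. strict_antimono_on {0..x0} f' \<and> strict_mono_on {x0..1} f'))"

definition dweight :: "(real \<Rightarrow> real) \<Rightarrow> nat \<Rightarrow> nat \<Rightarrow> nat \<Rightarrow> real" where
  "dweight W N np j = W (real (np - j + 1) / real N) - W ((real np - real j) / real N)"

text \<open>Transitional index; the convention h^+_{n^+ + 1} = \<infinity> makes j = n^+ always qualify.\<close>
definition trans_index :: "(real \<Rightarrow> real) \<Rightarrow> nat \<Rightarrow> nat \<Rightarrow> nat" where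
  "trans_index W N np = (LEAST j. j \<in> {1..np} \<and>
      (j = np \<or> real j * dweight W N np (j + 1) \<ge> (\<Sum>j'=1..j. dweight W N np j')))"

definition feasible :: "(real \<Rightarrow> real) \<Rightarrow> nat \<Rightarrow> nat \<Rightarrow> real \<Rightarrow> (nat \<Rightarrow> real) \<Rightarrow> bool" where
  "feasible W N np v y \<longleftrightarrow>
     (np \<ge> 1 \<longrightarrow> 0 \<le> y 1) \<and> (\<forall>j\<in>{1..<np}. y j \<le> y (j + 1)) \<and>
     (\<Sum>j=1..np. dweight W N np j * y j) = v"

definition objective :: "real \<Rightarrow> nat \<Rightarrow> (nat \<Rightarrow> real) \<Rightarrow> real" where
  "objective \<alpha> np y = (\<Sum>j=1..np. y j powr (1 / \<alpha>))"

end

theory Submission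
  imports Defs
begin

text \<open>
  The objective \<open>y \<mapsto> \<Sum>\<^sub>j y\<^sub>j powr (1/\<alpha>)\<close> is strictly convex, so \<open>y*\<close> is its unique
  minimiser on the feasible set as soon as \<open>\<Sum>\<^sub>j y*\<^sub>j powr (1/\<alpha> - 1) (y\<^sub>j - y*\<^sub>j) \<ge> 0\<close>
  for every feasible \<open>y\<close>. This gradient is proportional to \<open>S\<close> on the first \<open>J\<close> coordinates and
  to \<open>J h\<^sub>j\<close> beyond them; since \<open>y\<close> and \<open>y*\<close> meet the same budget, the inequality reduces
  to \<open>J \<Sum>\<^bsub>j\<le>J\<^esub> h\<^sub>j y\<^sub>j \<le> S \<Sum>\<^bsub>j\<le>J\<^esub> y\<^sub>j\<close>, a Chebyshev-type inequality: minimality of \<open>J\<close>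
  makes the prefix averages of \<open>h\<^sub>1, \<dots>, h\<^sub>J\<close> dominate their mean, and \<open>y\<close> is nondecreasing
  (Abel summation).

  Monotonicity of \<open>y*\<close> needs \<open>h\<close> to be nondecreasing beyond \<open>J\<close>. The V-shaped derivative of
  \<open>W\<close> makes the increments \<open>W (s + 1/N) - W s\<close>, hence the weights \<open>h\<close>, strictly quasiconvex;
  a decrease after \<open>J\<close> would then force \<open>h\<^bsub>J+1\<^esub> < h\<^sub>i\<close> for all \<open>i \<le> J\<close>, contradicting
  \<open>J h\<^bsub>J+1\<^esub> \<ge> S\<close>.
\<close>

definition strictly_quasiconvex_on :: "'a::linorder set \<Rightarrow> ('a \<Rightarrow> 'b::linorder) \<Rightarrow> bool" where
  "strictly_quasiconvex_on A f \<longleftrightarrow>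
     (\<forall>x\<in>A. \<forall>y\<in>A. \<forall>z\<in>A. x < y \<longrightarrow> y < z \<longrightarrow> f y < max (f x) (f z))"

lemma sum_split_at:
  fixes f :: "nat \<Rightarrow> 'a::comm_monoid_add"
  assumes "a \<le> b + 1" "b \<le> c"
  shows "sum f {a..c} = sum f {a..b} + sum f {b + 1..c}"
  using sum.ub_add_nat[of a b f "c - b"] assms by simp

lemma nondecreasing_after_crossing:
  fixes h :: "nat \<Rightarrow> real"
  assumes qc: "strictly_quasiconvex_on {1..n} h" and "1 \<le> J"
    and crossing: "(\<Sum>i=1..J. h i) \<le> real J * h (J + 1)"
    and "J < j" "j < n"
  shows "h j \<le> h (j + 1)"
proof (rule ccontr)
  assume "\<not> h j \<le> h (j + 1)"
  have "h (J + 1) < h i" if "i \<in> {1..J}" for i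
  proof -
    have "h j < max (h i) (h (j + 1))"
      using qc that assms(4,5) unfolding strictly_quasiconvex_on_def by auto
    then have "h j < h i"
      using \<open>\<not> h j \<le> h (j + 1)\<close> by auto
    moreover have "h (J + 1) < max (h i) (h j)" if "J + 1 < j"
      using qc \<open>i \<in> {1..J}\<close> that assms(5) unfolding strictly_quasiconvex_on_def by auto
    ultimately show ?thesis
      using assms(4) by (cases "J + 1 = j") auto
  qed
  then have "(\<Sum>i=1..J. h (J + 1)) < (\<Sum>i=1..J. h i)"
    using \<open>1 \<le> J\<close> by (intro sum_strict_mono) auto
  with crossing show False
    by simp
qed

lemma prefix_average_antimono:
  fixes h :: "nat \<Rightarrow> real"
  assumes below: "\<forall>m\<in>{1..<n}. real m * h (m + 1) \<le> (\<Sum>j=1..m. h j)"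
    and "1 \<le> m" "m \<le> k" "k \<le> n"
  shows "real m * (\<Sum>j=1..k. h j) \<le> real k * (\<Sum>j=1..m. h j)"
  using assms(3,4)
proof (induction k rule: dec_induct)
  case base
  then show ?case by simp
next
  case (step i)
  define P where "P = (\<lambda>i. \<Sum>j=1..i. h j)"
  have "0 < real i"
    using step \<open>1 \<le> m\<close> by simp
  have new_term: "real i * h (i + 1) \<le> P i"
    using below step \<open>1 \<le> m\<close> unfolding P_def by simp
  have IH: "real m * P i \<le> real i * P m"
    using step unfolding P_def by simp
  have "real i * (real m * P (Suc i)) = real m * (real i * P i) + real m * (real i * h (i + 1))"
    unfolding P_def by (simp add: algebra_simps)
  also have "\<dots> \<le> real m * (real i * P i) + real m * P i"
    using new_term by (simp add: mult_left_mono)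
  also have "\<dots> = (real i + 1) * (real m * P i)"
    by (simp add: algebra_simps)
  also have "\<dots> \<le> (real i + 1) * (real i * P m)"
    using IH by (simp add: mult_left_mono)
  finally have "real i * (real m * P (Suc i)) \<le> real i * ((real i + 1) * P m)"
    by (simp add: ac_simps)
  then show ?case
    using \<open>0 < real i\<close> unfolding P_def by (simp add: mult_le_cancel_left_pos add.commute)
qed

lemma sum_mult_ge_of_tail_sums_nonneg:
  fixes a y :: "nat \<Rightarrow> real"
  assumes tails: "\<forall>k\<in>{m<..n}. 0 \<le> sum a {k..n}" and mono: "\<forall>j\<in>{m..<n}. y j \<le> y (j + 1)"
    and "m \<le> n"
  shows "sum a {m..n} * y m \<le> (\<Sum>j=m..n. a j * y j)"
  using \<open>m \<le> n\<close>
proof (induction m rule: inc_induct)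
  case base
  then show ?case by simp
next
  case (step k)
  have "sum a {Suc k..n} * y k \<le> sum a {Suc k..n} * y (Suc k)"
    using tails mono step by (simp add: mult_left_mono)
  then show ?case
    using step by (simp add: sum.atLeast_Suc_atMost algebra_simps)
qed

lemma sum_mult_le_mean_mult_sum:
  fixes h y :: "nat \<Rightarrow> real"
  assumes front: "\<And>m. m \<in> {1..n} \<Longrightarrow> real m * (\<Sum>j=1..n. h j) \<le> real n * (\<Sum>j=1..m. h j)"
    and mono: "\<forall>j\<in>{1..<n}. y j \<le> y (j + 1)"
  shows "real n * (\<Sum>j=1..n. h j * y j) \<le> (\<Sum>j=1..n. h j) * (\<Sum>j=1..n. y j)"
proof (cases "n = 0")
  case False
  define S where "S = (\<Sum>j=1..n. h j)"
  define a where "a = (\<lambda>j. S - real n * h j)"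
  have "0 \<le> sum a {k..n}" if "k \<in> {1<..n}" for k
  proof -
    have split: "sum h {k..n} = S - (\<Sum>j=1..k-1. h j)"
      unfolding S_def using sum_split_at[of 1 "k - 1" n h] that by auto
    have "sum a {k..n} = real (Suc n - k) * S - real n * sum h {k..n}"
      unfolding a_def by (simp add: sum_subtractf sum_distrib_left)
    also have "\<dots> = (real n - real (k - 1)) * S - real n * (S - (\<Sum>j=1..k-1. h j))"
      using that split by (simp add: of_nat_diff)
    also have "\<dots> = real n * (\<Sum>j=1..k-1. h j) - real (k - 1) * S"
      by (simp add: algebra_simps)
    finally have "sum a {k..n} = real n * (\<Sum>j=1..k-1. h j) - real (k - 1) * S" .
    moreover have "k - 1 \<in> {1..n}"
      using that by auto
    then have "real (k - 1) * S \<le> real n * (\<Sum>j=1..k-1. h j)"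
      unfolding S_def by (rule front)
    ultimately show ?thesis
      by simp
  qed
  moreover have "sum a {1..n} = 0"
    unfolding a_def S_def by (simp add: sum_subtractf sum_distrib_left)
  ultimately have "0 \<le> (\<Sum>j=1..n. a j * y j)"
    using sum_mult_ge_of_tail_sums_nonneg[of 1 n a y] mono False by simp
  then show ?thesis
    unfolding a_def S_def by (simp add: algebra_simps sum_subtractf sum_distrib_left sum_distrib_right)
qed simp

lemma nonneg_if_nondecreasing:
  fixes y :: "nat \<Rightarrow> real"
  assumes "0 \<le> y 1" "\<forall>j\<in>{1..<n}. y j \<le> y (j + 1)" "j \<in> {1..n}"
  shows "0 \<le> y j"
proof -
  have "1 \<le> j" "j \<le> n"
    using assms(3) by auto
  then show ?thesis
  proof (induction j rule: dec_induct)
    case (step i)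
    then have "y i \<le> y (i + 1)"
      using assms(2) by simp
    with step show ?case
      by simp
  qed (use assms(1) in simp)
qed

section \<open>Decision weights of an inverse S-shaped function\<close>

lemma vshaped_increment_pos:
  fixes f' :: "real \<Rightarrow> real"
  assumes x0: "x0 \<in> {0..1}" "strict_antimono_on {0..x0} f'" "strict_mono_on {x0..1} f'"
    and "0 < \<delta>" "0 \<le> s" "s < t" "t + \<delta> \<le> 1"
    and nonneg: "f' s \<le> f' (s + \<delta>)"
  shows "f' t < f' (t + \<delta>)"
proof (cases "x0 \<le> t")
  case True
  then show ?thesis
    using monotone_onD[OF x0(3), of t "t + \<delta>"] assms by auto
next
  case False
  have "f' t < f' s"
    using monotone_onD[OF x0(2), of s t] False assms by auto
  moreover have "x0 < s + \<delta>"
  proof (rule ccontr)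
    assume "\<not> x0 < s + \<delta>"
    then have "f' (s + \<delta>) < f' s"
      using monotone_onD[OF x0(2), of s "s + \<delta>"] assms by auto
    with nonneg show False by simp
  qed
  then have "f' (s + \<delta>) < f' (t + \<delta>)"
    using monotone_onD[OF x0(3), of "s + \<delta>" "t + \<delta>"] assms by auto
  ultimately show ?thesis
    using nonneg by simp
qed

lemma increment_has_real_derivative:
  assumes der: "\<forall>x\<in>{0..1}. (W has_real_derivative W' x) (at x within {0..1})"
    and "0 \<le> \<delta>" "z \<in> {0..1 - \<delta>}"
  shows "((\<lambda>s. W (s + \<delta>) - W s) has_real_derivative W' (z + \<delta>) - W' z)
           (at z within {0..1 - \<delta>})"
proof -
  have "(W has_real_derivative W' (z + \<delta>)) (at (z + \<delta>) within (\<lambda>s. s + \<delta>) ` {0..1 - \<delta>})"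
    by (rule DERIV_subset[OF der[rule_format]]) (use assms in auto)
  then have "(W \<circ> (\<lambda>s. s + \<delta>) has_real_derivative W' (z + \<delta>) * 1) (at z within {0..1 - \<delta>})"
    by (rule DERIV_image_chain) (auto intro!: derivative_eq_intros)
  then have "((\<lambda>s. W (s + \<delta>)) has_real_derivative W' (z + \<delta>)) (at z within {0..1 - \<delta>})"
    by (simp add: o_def)
  moreover have "(W has_real_derivative W' z) (at z within {0..1 - \<delta>})"
    by (rule DERIV_subset[OF der[rule_format]]) (use assms in auto)
  ultimately show ?thesis
    by (rule DERIV_diff)
qed

lemma increment_strictly_quasiconvex:
  assumes der: "\<forall>x\<in>{0..1}. (W has_real_derivative W' x) (at x within {0..1})"
    and x0: "x0 \<in> {0..1}" "strict_antimono_on {0..x0} W'" "strict_mono_on {x0..1} W'"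
    and "0 < \<delta>"
  shows "strictly_quasiconvex_on {0..1 - \<delta>} (\<lambda>s. W (s + \<delta>) - W s)"
  unfolding strictly_quasiconvex_on_def
proof (intro ballI impI)
  define F where "F = (\<lambda>s. W (s + \<delta>) - W s)"
  fix a b c assume abc: "a \<in> {0..1 - \<delta>}" "b \<in> {0..1 - \<delta>}" "c \<in> {0..1 - \<delta>}" "a < b" "b < c"
  have mvt: "\<exists>z\<in>{u<..<w}. F w - F u = (W' (z + \<delta>) - W' z) * (w - u)"
    if "u \<in> {0..1 - \<delta>}" "w \<in> {0..1 - \<delta>}" "u < w" for u w
  proof (rule mvt_simple[OF \<open>u < w\<close>])
    fix x assume "u \<le> x" "x \<le> w"
    then have "(F has_real_derivative W' (x + \<delta>) - W' x) (at x within {0..1 - \<delta>})"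
      unfolding F_def using increment_has_real_derivative[OF der] that \<open>0 < \<delta>\<close> by simp
    then show "(F has_derivative (*) (W' (x + \<delta>) - W' x)) (at x within {u..w})"
      unfolding has_field_derivative_def by (rule has_derivative_subset) (use that in auto)
  qed
  obtain z1 where z1: "a < z1" "z1 < b" "F b - F a = (W' (z1 + \<delta>) - W' z1) * (b - a)"
    using mvt[of a b] abc by auto
  obtain z2 where z2: "b < z2" "z2 < c" "F c - F b = (W' (z2 + \<delta>) - W' z2) * (c - b)"
    using mvt[of b c] abc by auto
  show "F b < max (F a) (F c)"
  proof (rule ccontr)
    assume "\<not> F b < max (F a) (F c)"
    then have "0 \<le> (W' (z1 + \<delta>) - W' z1) * (b - a)"
      using z1 by simp
    then have "W' z1 \<le> W' (z1 + \<delta>)"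
      using z1 by (simp add: zero_le_mult_iff)
    then have "W' z2 < W' (z2 + \<delta>)"
      using vshaped_increment_pos[OF x0 \<open>0 < \<delta>\<close>, of z1 z2] abc z1 z2 by auto
    then have "0 < (W' (z2 + \<delta>) - W' z2) * (c - b)"
      using z2 by simp
    then have "F b < F c"
      using z2(3) by linarith
    with \<open>\<not> F b < max (F a) (F c)\<close> show False by simp
  qed
qed

lemma dweight_eq_increment:
  assumes "i \<le> np"
  shows "dweight W N np i = W ((real np - real i) / real N + 1 / real N) - W ((real np - real i) / real N)"
proof -
  have "real (np - i + 1) / N = (real np - real i) / N + 1 / N"
    using assms by (simp add: of_nat_diff add_divide_distrib)
  then show ?thesis
    unfolding dweight_def by simp
qed

lemma dweight_argument_bounds:
  assumes "1 \<le> i" "i \<le> np" "np \<le> N"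
  shows "(real np - real i) / real N \<in> {0..1 - 1 / real N}"
proof -
  have "(real np - real i) / N + 1 / N = (real np - real i + 1) / N"
    by (simp add: add_divide_distrib)
  also have "\<dots> \<le> 1"
    using assms by simp
  finally show ?thesis
    using assms by simp
qed

lemma dweight_pos:
  assumes "inverse_S_shaped W" "np \<le> N" "1 \<le> i" "i \<le> np"
  shows "0 < dweight W N np i"
proof -
  define s where "s = (real np - real i) / real N"
  have "s \<in> {0..1 - 1 / real N}" "0 < N"
    unfolding s_def using dweight_argument_bounds assms(2-4) by auto
  moreover have "strict_mono_on {0..1} W"
    using assms(1) unfolding inverse_S_shaped_def by blast
  ultimately have "W s < W (s + 1 / real N)"
    using monotone_onD[of "{0..1}" "(<)" "(<)" W s "s + 1 / real N"] by simp
  then show ?thesis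
    using dweight_eq_increment[OF assms(4)] unfolding s_def by simp
qed

lemma dweight_strictly_quasiconvex:
  assumes "inverse_S_shaped W" "np \<le> N"
  shows "strictly_quasiconvex_on {1..np} (dweight W N np)"
  unfolding strictly_quasiconvex_on_def
proof (intro ballI impI)
  fix j k l assume jkl: "j \<in> {1..np}" "k \<in> {1..np}" "l \<in> {1..np}" "j < k" "k < l"
  obtain W' x0 where der: "\<forall>x\<in>{0..1}. (W has_real_derivative W' x) (at x within {0..1})"
    and x0: "x0 \<in> {0..1}" "strict_antimono_on {0..x0} W'" "strict_mono_on {x0..1} W'"
    using assms(1) unfolding inverse_S_shaped_def by blast
  define s where "s = (\<lambda>i::nat. (real np - real i) / real N)"
  have N: "0 < N"
    using jkl assms(2) by auto
  have qc: "strictly_quasiconvex_on {0..1 - 1 / real N} (\<lambda>s. W (s + 1 / real N) - W s)"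
    using increment_strictly_quasiconvex[OF der x0] N by simp
  have "s i \<in> {0..1 - 1 / real N}" "dweight W N np i = W (s i + 1 / real N) - W (s i)" if "i \<in> {1..np}" for i
    unfolding s_def using that dweight_argument_bounds dweight_eq_increment assms(2) by auto
  moreover have "s l < s k" "s k < s j"
    unfolding s_def using jkl N by (auto simp: divide_strict_right_mono)
  ultimately show "dweight W N np k < max (dweight W N np j) (dweight W N np l)"
    using qc jkl unfolding strictly_quasiconvex_on_def by (metis max.commute)
qed

lemma trans_index_bounds:
  assumes "1 \<le> np"
  shows "1 \<le> trans_index W N np" "trans_index W N np \<le> np"
proof -
  have "trans_index W N np \<in> {1..np}"
    unfolding trans_index_def by (rule LeastI2[of _ np]) (use assms in auto)
  then show "1 \<le> trans_index W N np" "trans_index W N np \<le> np"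
    by auto
qed

lemma trans_index_crossing:
  assumes "1 \<le> np" "trans_index W N np < np"
  shows "(\<Sum>j=1..trans_index W N np. dweight W N np j)
           \<le> real (trans_index W N np) * dweight W N np (trans_index W N np + 1)"
  using assms LeastI[of "\<lambda>j. j \<in> {1..np} \<and> (j = np \<or>
      real j * dweight W N np (j + 1) \<ge> (\<Sum>j'=1..j. dweight W N np j'))" np]
  unfolding trans_index_def by auto

lemma trans_index_least:
  assumes "1 \<le> np" "1 \<le> m" "m < trans_index W N np"
  shows "real m * dweight W N np (m + 1) < (\<Sum>j=1..m. dweight W N np j)"
  using assms trans_index_bounds[OF assms(1), of W N] not_less_Least[of m "\<lambda>j. j \<in> {1..np} \<and> (j = np \<or>
      real j * dweight W N np (j + 1) \<ge> (\<Sum>j'=1..j. dweight W N np j'))"]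
  unfolding trans_index_def by auto

lemma dweight_nondecreasing_after_trans_index:
  assumes "inverse_S_shaped W" "1 \<le> np" "np \<le> N" "trans_index W N np < j" "j < np"
  shows "dweight W N np j \<le> dweight W N np (j + 1)"
proof (rule nondecreasing_after_crossing[OF dweight_strictly_quasiconvex[OF assms(1,3)]])
  show "(\<Sum>i=1..trans_index W N np. dweight W N np i)
      \<le> real (trans_index W N np) * dweight W N np (trans_index W N np + 1)"
    using trans_index_crossing[OF assms(2)] assms(4,5) by simp
qed (use trans_index_bounds[OF assms(2)] assms(4,5) in auto)

lemma trans_index_prefix_average:
  assumes "1 \<le> np" "m \<in> {1..trans_index W N np}"
  shows "real m * (\<Sum>j=1..trans_index W N np. dweight W N np j)
           \<le> real (trans_index W N np) * (\<Sum>j=1..m. dweight W N np j)"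
proof -
  have "\<forall>m\<in>{1..<trans_index W N np}. real m * dweight W N np (m + 1) \<le> (\<Sum>j=1..m. dweight W N np j)"
    using trans_index_least[OF assms(1)] by (simp add: less_imp_le)
  then show ?thesis
    using prefix_average_antimono assms(2) by simp
qed

section \<open>Convexity of the objective\<close>

lemma powr_tangent_less:
  fixes p x y :: real
  assumes "1 < p" "0 \<le> x" "0 \<le> y" "x \<noteq> y"
  shows "x powr p + p * x powr (p - 1) * (y - x) < y powr p"
proof -
  have both: "a powr p + p * a powr (p - 1) * (b - a) < b powr p \<and>
              b powr p + p * b powr (p - 1) * (a - b) < a powr p" if "0 \<le> a" "a < b" for a b
  proof -
    have "continuous_on {a..b} (\<lambda>t. t powr p)"
      using that \<open>1 < p\<close> by (intro continuous_on_powr') (auto intro!: continuous_intros)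
    moreover have der: "((\<lambda>t. t powr p) has_real_derivative p * t powr (p - 1)) (at t)"
      if "a < t" for t
      using has_real_derivative_powr[of t] that \<open>0 \<le> a\<close> by simp
    ultimately obtain l z where z: "a < z" "z < b" "DERIV (\<lambda>t. t powr p) z :> l"
        and "b powr p - a powr p = (b - a) * l"
      using MVT[OF \<open>a < b\<close>] real_differentiable_def by blast
    moreover have "l = p * z powr (p - 1)"
      using DERIV_unique[OF z(3) der] z by simp
    ultimately have mvt: "b powr p - a powr p = (b - a) * (p * z powr (p - 1))"
      by simp
    have "a powr (p - 1) < z powr (p - 1)" "z powr (p - 1) < b powr (p - 1)"
      using z that \<open>1 < p\<close> by (auto intro!: powr_less_mono2)
    then have "(b - a) * p * a powr (p - 1) < (b - a) * p * z powr (p - 1)"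
              "(b - a) * p * z powr (p - 1) < (b - a) * p * b powr (p - 1)"
      using that \<open>1 < p\<close> by (simp_all add: mult_strict_left_mono)
    then show ?thesis
      using mvt by (simp add: algebra_simps)
  qed
  show ?thesis
    using both[of x y] both[of y x] assms by (cases "x < y") auto
qed

lemma sum_powr_le_of_gradient_nonneg:
  fixes x y :: "'a \<Rightarrow> real"
  assumes "1 < p" "finite A" "\<forall>j\<in>A. 0 \<le> x j" "\<forall>j\<in>A. 0 \<le> y j"
    and gradient: "0 \<le> (\<Sum>j\<in>A. x j powr (p - 1) * (y j - x j))"
  shows "(\<Sum>j\<in>A. x j powr p) \<le> (\<Sum>j\<in>A. y j powr p)"
    and "(\<Sum>j\<in>A. y j powr p) = (\<Sum>j\<in>A. x j powr p) \<Longrightarrow> \<forall>j\<in>A. y j = x j"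
proof -
  define gap where "gap = (\<lambda>j. y j powr p - x j powr p - p * x j powr (p - 1) * (y j - x j))"
  have gap_nonneg: "\<forall>j\<in>A. 0 \<le> gap j"
  proof
    fix j assume "j \<in> A"
    then show "0 \<le> gap j"
      using powr_tangent_less[of p "x j" "y j"] assms(1,3,4) unfolding gap_def
      by (cases "x j = y j") auto
  qed
  have decomp: "(\<Sum>j\<in>A. gap j) + p * (\<Sum>j\<in>A. x j powr (p - 1) * (y j - x j))
        = (\<Sum>j\<in>A. y j powr p) - (\<Sum>j\<in>A. x j powr p)"
    unfolding gap_def by (simp add: sum_subtractf sum_distrib_left mult.assoc)
  have linear_part: "0 \<le> p * (\<Sum>j\<in>A. x j powr (p - 1) * (y j - x j))"
    using gradient \<open>1 < p\<close> by simp
  have gap_sum: "0 \<le> (\<Sum>j\<in>A. gap j)"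
    using gap_nonneg by (simp add: sum_nonneg)
  show "(\<Sum>j\<in>A. x j powr p) \<le> (\<Sum>j\<in>A. y j powr p)"
    using decomp linear_part gap_sum by linarith
  assume "(\<Sum>j\<in>A. y j powr p) = (\<Sum>j\<in>A. x j powr p)"
  then have "(\<Sum>j\<in>A. gap j) = 0"
    using decomp linear_part gap_sum by linarith
  then have "\<forall>j\<in>A. gap j = 0"
    using sum_nonneg_eq_0_iff[OF \<open>finite A\<close>] gap_nonneg by blast
  then show "\<forall>j\<in>A. y j = x j"
    using powr_tangent_less assms(1,3,4) unfolding gap_def by fastforce
qed

section \<open>The explicit minimiser\<close>

context
  fixes h :: "nat \<Rightarrow> real" and np J :: nat and \<alpha> v S Y :: real and ystar :: "nat \<Rightarrow> real"
  assumes \<alpha>: "0 < \<alpha>" "\<alpha> < 1"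
    and J: "1 \<le> J" "J \<le> np"
    and h_pos: "\<And>j. 1 \<le> j \<Longrightarrow> j \<le> np \<Longrightarrow> 0 < h j"
    and h_mono: "\<And>j. J < j \<Longrightarrow> j < np \<Longrightarrow> h j \<le> h (j + 1)"
    and v: "0 \<le> v"
    and S_def: "S = (\<Sum>j=1..J. h j)"
    and Y_def: "Y = v * S powr (\<alpha> / (1 - \<alpha>)) /
      (S powr (1 / (1 - \<alpha>)) + real J powr (\<alpha> / (1 - \<alpha>)) *
         (\<Sum>j=J+1..np. h j powr (1 / (1 - \<alpha>))))"
    and ystar_def: "ystar = (\<lambda>j. if j \<le> J then Y else (real J * h j / S) powr (\<alpha> / (1 - \<alpha>)) * Y)"
    and crossing: "J < np \<Longrightarrow> S \<le> real J * h (J + 1)"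
    and front: "\<And>m. m \<in> {1..J} \<Longrightarrow> real m * S \<le> real J * (\<Sum>j=1..m. h j)"
begin

lemma candidate_S_pos: "0 < S"
  unfolding S_def using h_pos J by (intro sum_pos) auto

lemma candidate_Y_nonneg: "0 \<le> Y"
  unfolding Y_def using candidate_S_pos v
  by (intro divide_nonneg_pos add_pos_nonneg mult_nonneg_nonneg sum_nonneg) auto

lemma candidate_nonneg: "0 \<le> ystar j"
  unfolding ystar_def using candidate_Y_nonneg by simp

lemma candidate_nondecreasing: "\<forall>j\<in>{1..<np}. ystar j \<le> ystar (j + 1)"
proof
  fix j assume j: "j \<in> {1..<np}"
  have base_mono: "real J * h j / S \<le> real J * h (j + 1) / S" if "J < j"
  proof -
    have "h j \<le> h (j + 1)"
      using h_mono j that by simp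
    then show ?thesis
      using candidate_S_pos by (intro divide_right_mono mult_left_mono) auto
  qed
  consider "j < J" | "j = J" | "J < j"
    by linarith
  then show "ystar j \<le> ystar (j + 1)"
  proof cases
    case 2
    then have "1 \<le> real J * h (J + 1) / S"
      using crossing j candidate_S_pos by simp
    then have "1 \<le> (real J * h (J + 1) / S) powr (\<alpha> / (1 - \<alpha>))"
      using \<alpha> by (intro ge_one_powr_ge_zero) auto
    then have "1 * Y \<le> (real J * h (J + 1) / S) powr (\<alpha> / (1 - \<alpha>)) * Y"
      using candidate_Y_nonneg by (rule mult_right_mono)
    then show ?thesis
      unfolding ystar_def using 2 by simp
  next
    case 3
    have "0 < h j"
      using h_pos j by simp
    then have "(real J * h j / S) powr (\<alpha> / (1 - \<alpha>)) \<le> (real J * h (j + 1) / S) powr (\<alpha> / (1 - \<alpha>))"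
      using base_mono[OF 3] candidate_S_pos \<alpha> by (intro powr_mono2) auto
    then show ?thesis
      unfolding ystar_def using 3 candidate_Y_nonneg by (simp add: mult_right_mono)
  qed (simp add: ystar_def)
qed

lemma candidate_budget: "(\<Sum>j=1..np. h j * ystar j) = v"
proof -
  define q where "q = \<alpha> / (1 - \<alpha>)"
  define D where "D = S powr (q + 1) + real J powr q * (\<Sum>j=J+1..np. h j powr (q + 1))"
  have "1 / (1 - \<alpha>) = q + 1"
    unfolding q_def using \<alpha> by (simp add: field_simps)
  then have Y_eq: "Y = v * S powr q / D"
    unfolding Y_def D_def q_def by simp
  have "0 < D"
    unfolding D_def using candidate_S_pos by (intro add_pos_nonneg mult_nonneg_nonneg sum_nonneg) auto
  have tail: "h j * ystar j = real J powr q / S powr q * h j powr (q + 1) * Y" if "j \<in> {J+1..np}" for j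
  proof -
    have "0 < h j"
      using h_pos that J by simp
    then show ?thesis
      unfolding ystar_def q_def using that candidate_S_pos by (simp add: powr_divide powr_mult powr_add)
  qed
  have head: "(\<Sum>j=1..J. h j * ystar j) = S * Y"
    unfolding S_def ystar_def by (simp add: sum_distrib_right)
  have "(\<Sum>j=J+1..np. h j * ystar j)
      = real J powr q / S powr q * (\<Sum>j=J+1..np. h j powr (q + 1)) * Y"
    using tail by (simp add: sum_distrib_right sum_distrib_left)
  then have "(\<Sum>j=1..np. h j * ystar j)
      = S * Y + real J powr q / S powr q * (\<Sum>j=J+1..np. h j powr (q + 1)) * Y"
    using sum_split_at[of 1 J np "\<lambda>j. h j * ystar j"] J head by simp
  also have "\<dots> = Y * D / S powr q"
  proof -
    have "S powr (q + 1) = S powr q * S"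
      using candidate_S_pos by (simp add: powr_add)
    then show ?thesis
      unfolding D_def using candidate_S_pos by (simp add: divide_simps algebra_simps)
  qed
  also have "\<dots> = v"
    unfolding Y_eq using \<open>0 < D\<close> candidate_S_pos by simp
  finally show ?thesis .
qed

lemma candidate_gradient_nonneg:
  assumes mono: "\<forall>j\<in>{1..<np}. y j \<le> y (j + 1)" and budget: "(\<Sum>j=1..np. h j * y j) = v"
  shows "0 \<le> (\<Sum>j=1..np. ystar j powr (1 / \<alpha> - 1) * (y j - ystar j))"
proof -
  define w where "w = (\<lambda>j. if j \<le> J then S else real J * h j)"
  have gradient: "ystar j powr (1 / \<alpha> - 1) = Y powr (1 / \<alpha> - 1) / S * w j" if "j \<in> {1..np}" for j
  proof (cases "j \<le> J")
    case False
    define c where "c = real J * h j / S"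
    have "0 \<le> c"
      unfolding c_def using h_pos that candidate_S_pos by (simp add: less_imp_le)
    have "ystar j powr (1 / \<alpha> - 1) = (c powr (\<alpha> / (1 - \<alpha>))) powr (1 / \<alpha> - 1) * Y powr (1 / \<alpha> - 1)"
      unfolding ystar_def c_def using False candidate_Y_nonneg by (simp add: powr_mult)
    also have "\<dots> = c powr ((\<alpha> / (1 - \<alpha>)) * (1 / \<alpha> - 1)) * Y powr (1 / \<alpha> - 1)"
      by (simp add: powr_powr)
    also have "(\<alpha> / (1 - \<alpha>)) * (1 / \<alpha> - 1) = 1"
      using \<alpha> by (simp add: field_simps)
    finally have "ystar j powr (1 / \<alpha> - 1) = c * Y powr (1 / \<alpha> - 1)"
      using \<open>0 \<le> c\<close> by simp
    then show ?thesis
      unfolding w_def c_def using False by simp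
  qed (use candidate_S_pos in \<open>simp add: ystar_def w_def\<close>)
  have "(\<Sum>j=1..np. w j * (y j - ystar j))
        = real J * (\<Sum>j=1..np. h j * (y j - ystar j)) + (\<Sum>j=1..np. (w j - real J * h j) * (y j - ystar j))"
    by (simp add: sum_distrib_left sum.distrib[symmetric] algebra_simps)
  also have "(\<Sum>j=1..np. h j * (y j - ystar j)) = 0"
    using budget candidate_budget by (simp add: right_diff_distrib sum_subtractf)
  also have "(\<Sum>j=1..np. (w j - real J * h j) * (y j - ystar j)) = (\<Sum>j=1..J. (S - real J * h j) * (y j - Y))"
  proof -
    have "(\<Sum>j=J+1..np. (w j - real J * h j) * (y j - ystar j)) = 0"
      unfolding w_def by simp
    moreover have "(\<Sum>j=1..J. (w j - real J * h j) * (y j - ystar j)) = (\<Sum>j=1..J. (S - real J * h j) * (y j - Y))"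
      unfolding w_def ystar_def by (intro sum.cong) auto
    ultimately show ?thesis
      using sum_split_at[of 1 J np "\<lambda>j. (w j - real J * h j) * (y j - ystar j)"] J by simp
  qed
  also have "\<dots> = (\<Sum>j=1..J. (S - real J * h j) * y j) - Y * (\<Sum>j=1..J. S - real J * h j)"
    by (simp add: right_diff_distrib sum_subtractf sum_distrib_left mult_ac)
  also have "(\<Sum>j=1..J. S - real J * h j) = 0"
    unfolding S_def by (simp add: sum_subtractf sum_distrib_left)
  also have "(\<Sum>j=1..J. (S - real J * h j) * y j) = S * (\<Sum>j=1..J. y j) - real J * (\<Sum>j=1..J. h j * y j)"
    by (simp add: left_diff_distrib sum_subtractf sum_distrib_left mult.assoc)
  finally have "0 \<le> (\<Sum>j=1..np. w j * (y j - ystar j))"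
    using sum_mult_le_mean_mult_sum[of J h y, OF front[unfolded S_def]] mono J unfolding S_def
    by (simp add: mult.commute)
  have "(\<Sum>j=1..np. ystar j powr (1 / \<alpha> - 1) * (y j - ystar j))
        = (\<Sum>j=1..np. Y powr (1 / \<alpha> - 1) / S * (w j * (y j - ystar j)))"
    using gradient by (intro sum.cong) auto
  also have "\<dots> = Y powr (1 / \<alpha> - 1) / S * (\<Sum>j=1..np. w j * (y j - ystar j))"
    by (rule sum_distrib_left[symmetric])
  finally show ?thesis
    using \<open>0 \<le> (\<Sum>j=1..np. w j * (y j - ystar j))\<close> candidate_S_pos by simp
qed

lemma candidate_optimal:
  assumes "0 \<le> y 1" "\<forall>j\<in>{1..<np}. y j \<le> y (j + 1)" "(\<Sum>j=1..np. h j * y j) = v"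
  shows "objective \<alpha> np ystar \<le> objective \<alpha> np y"
    and "objective \<alpha> np y = objective \<alpha> np ystar \<Longrightarrow> \<forall>j\<in>{1..np}. y j = ystar j"
proof -
  have p: "1 < 1 / \<alpha>"
    using \<alpha> by simp
  have y_nonneg: "\<forall>j\<in>{1..np}. 0 \<le> y j"
    using nonneg_if_nondecreasing[OF assms(1,2)] by blast
  have ystar_nonneg: "\<forall>j\<in>{1..np}. 0 \<le> ystar j"
    using candidate_nonneg by blast
  note certificate = sum_powr_le_of_gradient_nonneg[OF p finite_atLeastAtMost ystar_nonneg y_nonneg
      candidate_gradient_nonneg[OF assms(2,3)]]
  show "objective \<alpha> np ystar \<le> objective \<alpha> np y"
    unfolding objective_def by (rule certificate(1))
  show "objective \<alpha> np y = objective \<alpha> np ystar \<Longrightarrow> \<forall>j\<in>{1..np}. y j = ystar j"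
    unfolding objective_def by (rule certificate(2))
qed

end

theorem theorem1:
  fixes W :: "real \<Rightarrow> real" and N np :: nat and \<alpha> v :: real
  assumes "0 < \<alpha>" and "\<alpha> < 1"
    and "1 \<le> np" and "np \<le> N"
    and "inverse_S_shaped W" and "W 0 = 0" and "W 1 = 1"
    and "0 \<le> v"
  defines "h \<equiv> dweight W N np"
  defines "J \<equiv> trans_index W N np"
  defines "S \<equiv> (\<Sum>j'=1..J. h j')"
  defines "Y \<equiv> v * S powr (\<alpha> / (1 - \<alpha>)) /
      (S powr (1 / (1 - \<alpha>)) + real J powr (\<alpha> / (1 - \<alpha>)) *
         (\<Sum>j'=J+1..np. h j' powr (1 / (1 - \<alpha>))))"
  defines "ystar \<equiv> (\<lambda>j. if j \<le> J then Y else (real J * h j / S) powr (\<alpha> / (1 - \<alpha>)) * Y)"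
  shows "feasible W N np v ystar
    \<and> (\<forall>y. feasible W N np v y \<longrightarrow> objective \<alpha> np ystar \<le> objective \<alpha> np y)
    \<and> (\<forall>y. feasible W N np v y \<and> objective \<alpha> np y = objective \<alpha> np ystar \<longrightarrow>
           (\<forall>j\<in>{1..np}. y j = ystar j))"
proof -
  note candidate = assms(1,2) trans_index_bounds[OF \<open>1 \<le> np\<close>, of W N, folded J_def]
    dweight_pos[OF \<open>inverse_S_shaped W\<close> \<open>np \<le> N\<close>, folded h_def]
    dweight_nondecreasing_after_trans_index[OF \<open>inverse_S_shaped W\<close> \<open>1 \<le> np\<close> \<open>np \<le> N\<close>,
      folded h_def J_def]
    \<open>0 \<le> v\<close> S_def[THEN meta_eq_to_obj_eq] Y_def[THEN meta_eq_to_obj_eq] ystar_def[THEN meta_eq_to_obj_eq]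
    trans_index_crossing[OF \<open>1 \<le> np\<close>, where W = W and N = N, folded h_def J_def, folded S_def]
    trans_index_prefix_average[OF \<open>1 \<le> np\<close>, where W = W and N = N, folded h_def J_def, folded S_def]
  have "feasible W N np v ystar"
    unfolding feasible_def h_def[symmetric]
    using candidate_nonneg[OF candidate] candidate_nondecreasing[OF candidate]
      candidate_budget[OF candidate] by blast
  moreover have "objective \<alpha> np ystar \<le> objective \<alpha> np y"
    and "objective \<alpha> np y = objective \<alpha> np ystar \<Longrightarrow> \<forall>j\<in>{1..np}. y j = ystar j"
    if "feasible W N np v y" for y
  proof -
    have y: "0 \<le> y 1" "\<forall>j\<in>{1..<np}. y j \<le> y (j + 1)" "(\<Sum>j=1..np. h j * y j) = v"
      using that \<open>1 \<le> np\<close> unfolding feasible_def h_def by auto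
    show "objective \<alpha> np ystar \<le> objective \<alpha> np y"
      by (rule candidate_optimal(1)[OF candidate y])
    show "objective \<alpha> np y = objective \<alpha> np ystar \<Longrightarrow> \<forall>j\<in>{1..np}. y j = ystar j"
      by (rule candidate_optimal(2)[OF candidate y])
  qed
  ultimately show ?thesis
    by blast
qed

end
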